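(* Let $(A,\circ,[\cdot,\cdot])$ be a finite-dimensional dual pre-Poisson algebra and let $r\in A\otimes A$ be symmetric. Then $r$ is a solution of the permutative-Leibniz Yang–Baxter equation if and only if $\tilde r:A^*\to A$ satisfies, for all $a^*,b^*\in A^*$, $$\tilde r(a^* )\circ\tilde r(b^* )=\tilde r\big(-L_\circ^*(\tilde r(a^* ))b^*-L_\blacksquare^*(\tilde r(b^* ))a^*\big),$$ $$[\tilde r(a^* ),\tilde r(b^* )]=\tilde r\big(L_{[\cdot,\cdot]}^*(\tilde r(a^* ))b^*-L_\square^*(\tilde r(b^* ))a^*\big),$$ i.e. $\tilde r$ is an $\mathcal{O}$-operator on $(A,\circ,[\cdot,\cdot])$ associated to the representation $(A^*;-L_\circ^*,-L_\blacksquare^*,L_{[\cdot,\cdot]}^*,-L_\square^* )$.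
   Context: Field $\mathbb{F}$ of characteristic $0$. Dual pre-Poisson algebra: $x\circ(y\circ z)=(x\circ y)\circ z=(y\circ x)\circ z$; $[x,[y,z]]=[[x,y],z]+[y,[x,z]]$; $[x,y\circ z]=[x,y]\circ z+y\circ[x,z]$; $[x\circ y,z]=x\circ[y,z]+y\circ[x,z]$; $[x,y]\circ z=-[y,x]\circ z$. $x\blacksquare y=x\circ y-y\circ x$, $x\square y=[x,y]+[y,x]$; $L_\diamond(x)y=x\diamond y$; for $f:A\to\mathrm{End}(A)$, $\langle f^*(x)a^*,y\rangle=-\langle a^*,f(x)y\rangle$. For $r\in A\otimes A$, $\tilde r:A^*\to A$ is defined by $\langle\tilde r(u^* ),v^*\rangle=\langle r,u^*\otimes v^*\rangle$. Symmetric means invariant under the flip. PLYBE: for $r=\sum_i a_i\otimes b_i$, $\mathbf{P}(r)=\sum_{i,j}\big(a_i\otimes a_j\otimes b_i\circ b_j-a_i\otimes b_i\circ a_j\otimes b_j+a_i\blacksquare a_j\otimes b_j\otimes b_i\big)$, $\mathbf{L}(r)=\sum_{i,j}\big(a_i\otimes a_j\otimes[b_i,b_j]+a_i\otimes[b_i,a_j]\otimes b_j-a_i\square a_j\otimes b_i\otimes b_j\big)$; $r$ is a solution if $\mathbf{P}(r)=\mathbf{L}(r)=0$. *)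

theory Defs
  imports Main
begin

text \<open>A finite-dimensional vector space over a field 'k of characteristic 0 is
  modelled in coordinates w.r.t. a basis indexed by a finite type 'n:
  vectors are functions 'n \<Rightarrow> 'k.  The dual space A* is modelled via the dual
  basis, also as functions 'n \<Rightarrow> 'k, with the pairing below.
  Tensors in A\<otimes>A (resp. A\<otimes>A\<otimes>A) are coefficient arrays.\<close>

type_synonym ('k, 'n) vec = "'n \<Rightarrow> 'k"

definition vadd :: "('k::field, 'n) vec \<Rightarrow> ('k, 'n) vec \<Rightarrow> ('k, 'n) vec" where
  "vadd x y = (\<lambda>i. x i + y i)"

definition vsub :: "('k::field, 'n) vec \<Rightarrow> ('k, 'n) vec \<Rightarrow> ('k, 'n) vec" where
  "vsub x y = (\<lambda>i. x i - y i)"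

definition vneg :: "('k::field, 'n) vec \<Rightarrow> ('k, 'n) vec" where
  "vneg x = (\<lambda>i. - x i)"

definition vsmult :: "'k::field \<Rightarrow> ('k, 'n) vec \<Rightarrow> ('k, 'n) vec" where
  "vsmult c x = (\<lambda>i. c * x i)"

definition basis_vec :: "'n \<Rightarrow> ('k::field, 'n) vec" where
  "basis_vec j = (\<lambda>i. if i = j then 1 else 0)"

definition dpair :: "('k::field, 'n::finite) vec \<Rightarrow> ('k, 'n) vec \<Rightarrow> 'k" where
  "dpair u x = (\<Sum>i\<in>UNIV. u i * x i)"

definition bilinear_op :: "(('k::field, 'n) vec \<Rightarrow> ('k, 'n) vec \<Rightarrow> ('k, 'n) vec) \<Rightarrow> bool" where
  "bilinear_op m \<longleftrightarrow>
     (\<forall>x y z. m (vadd x y) z = vadd (m x z) (m y z)) \<and>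
     (\<forall>x y z. m x (vadd y z) = vadd (m x y) (m x z)) \<and>
     (\<forall>c x y. m (vsmult c x) y = vsmult c (m x y)) \<and>
     (\<forall>c x y. m x (vsmult c y) = vsmult c (m x y))"

definition dual_pre_poisson ::
  "(('k::field, 'n) vec \<Rightarrow> ('k, 'n) vec \<Rightarrow> ('k, 'n) vec) \<Rightarrow>
   (('k, 'n) vec \<Rightarrow> ('k, 'n) vec \<Rightarrow> ('k, 'n) vec) \<Rightarrow> bool" where
  "dual_pre_poisson cc br \<longleftrightarrow>
     bilinear_op cc \<and> bilinear_op br \<and>
     (\<forall>x y z. cc x (cc y z) = cc (cc x y) z) \<and>
     (\<forall>x y z. cc (cc x y) z = cc (cc y x) z) \<and>
     (\<forall>x y z. br x (br y z) = vadd (br (br x y) z) (br y (br x z))) \<and>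
     (\<forall>x y z. br x (cc y z) = vadd (cc (br x y) z) (cc y (br x z))) \<and>
     (\<forall>x y z. br (cc x y) z = vadd (cc x (br y z)) (cc y (br x z))) \<and>
     (\<forall>x y z. cc (br x y) z = vneg (cc (br y x) z))"

definition bsq_op where "bsq_op cc x y = vsub (cc x y) (cc y x)"
definition sq_op where "sq_op br x y = vadd (br x y) (br y x)"

text \<open>For \<open>f : A \<rightarrow> End(A)\<close> (given as \<open>f x y\<close>), \<open>f\<^sup>*(x) : A* \<rightarrow> A*\<close> with
  \<open>\<langle>f\<^sup>*(x) a, y\<rangle> = - \<langle>a, f(x) y\<rangle>\<close>, in dual-basis coordinates.\<close>
definition dual_op ::
  "(('k::field, 'n::finite) vec \<Rightarrow> ('k, 'n) vec \<Rightarrow> ('k, 'n) vec) \<Rightarrow>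
   ('k, 'n) vec \<Rightarrow> ('k, 'n) vec \<Rightarrow> ('k, 'n) vec" where
  "dual_op f x a = (\<lambda>j. - dpair a (f x (basis_vec j)))"

text \<open>\<open>r \<in> A\<otimes>A\<close> as a coefficient array; \<open>\<tilde>r\<close> with \<open>\<langle>\<tilde>r(u), v\<rangle> = \<langle>r, u\<otimes>v\<rangle>\<close>.\<close>
definition r_tilde :: "('n::finite \<Rightarrow> 'n \<Rightarrow> 'k::field) \<Rightarrow> ('k, 'n) vec \<Rightarrow> ('k, 'n) vec" where
  "r_tilde r u = (\<lambda>j. \<Sum>i\<in>UNIV. u i * r i j)"

definition tensor_sym :: "('n \<Rightarrow> 'n \<Rightarrow> 'k) \<Rightarrow> bool" where
  "tensor_sym r \<longleftrightarrow> (\<forall>i j. r i j = r j i)"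

definition tensor_of :: "nat \<Rightarrow> (nat \<Rightarrow> ('k::field, 'n) vec) \<Rightarrow> (nat \<Rightarrow> ('k, 'n) vec) \<Rightarrow> 'n \<Rightarrow> 'n \<Rightarrow> 'k" where
  "tensor_of m a b = (\<lambda>p q. \<Sum>i<m. a i p * b i q)"

definition P_of where
  "P_of cc m a b = (\<lambda>p q s. \<Sum>i<m. \<Sum>j<m.
      a i p * a j q * cc (b i) (b j) s
    - a i p * cc (b i) (a j) q * b j s
    + bsq_op cc (a i) (a j) p * b j q * b i s)"

definition L_of where
  "L_of br m a b = (\<lambda>p q s. \<Sum>i<m. \<Sum>j<m.
      a i p * a j q * br (b i) (b j) s
    + a i p * br (b i) (a j) q * b j s
    - sq_op br (a i) (a j) p * b i q * b j s)"

definition PLYBE_solution where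
  "PLYBE_solution cc br m a b \<longleftrightarrow> P_of cc m a b = (\<lambda>p q s. 0) \<and> L_of br m a b = (\<lambda>p q s. 0)"

end

(* Pair both O-operator identities with u \<otimes> v: by bilinearity, the difference of the two
   sides becomes the contraction of P(r), resp. L(r), with u \<otimes> v in the first two tensor
   slots.  Symmetry of r is what allows \<tilde>r(v) to be expanded as \<Sum>\<^sub>i \<langle>v, b\<^sub>i\<rangle> a\<^sub>i, and the
   antisymmetry of \<blacksquare> produces the sign of its term.  A 3-tensor vanishes iff all these
   contractions do (test against dual basis vectors). *)

theory Submission
  imports Defs
begin

definition lin_comb :: "'i set \<Rightarrow> ('i \<Rightarrow> 'k::field) \<Rightarrow> ('i \<Rightarrow> ('k, 'n) vec) \<Rightarrow> ('k, 'n) vec" where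
  "lin_comb I c x = (\<lambda>k. \<Sum>i\<in>I. c i * x i k)"

lemma lin_comb_empty [simp]: "lin_comb {} c x = (\<lambda>_. 0)"
  by (simp add: lin_comb_def)

lemma lin_comb_insert:
  "finite I \<Longrightarrow> i \<notin> I \<Longrightarrow> lin_comb (insert i I) c x = vadd (vsmult (c i) (x i)) (lin_comb I c x)"
  by (simp add: lin_comb_def vadd_def vsmult_def)

lemma vec_eq_lin_comb_basis_vec: "(x :: ('k::field, 'n::finite) vec) = lin_comb UNIV x basis_vec"
  by (simp add: lin_comb_def basis_vec_def if_distrib cong: if_cong)

lemma vsmult_zero [simp]: "vsmult 0 x = (\<lambda>_. 0)"
  by (simp add: vsmult_def)

lemma bilinear_op_zero_left:
  assumes "bilinear_op f" shows "f (\<lambda>_. 0) y = (\<lambda>_. 0)"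
proof -
  have "f (vsmult 0 y) y = vsmult 0 (f y y)" using assms unfolding bilinear_op_def by blast
  then show ?thesis by simp
qed

lemma bilinear_op_zero_right:
  assumes "bilinear_op f" shows "f y (\<lambda>_. 0) = (\<lambda>_. 0)"
proof -
  have "f y (vsmult 0 y) = vsmult 0 (f y y)" using assms unfolding bilinear_op_def by blast
  then show ?thesis by simp
qed

lemma bilinear_op_lin_comb_left:
  assumes "bilinear_op f" "finite I"
  shows "f (lin_comb I c x) y = lin_comb I c (\<lambda>i. f (x i) y)"
  using assms(2)
proof (induction I rule: finite_induct)
  case empty
  then show ?case using bilinear_op_zero_left[OF assms(1)] by simp
next
  case (insert i I)
  then show ?case using assms(1) unfolding bilinear_op_def by (simp add: lin_comb_insert)
qed

lemma bilinear_op_lin_comb_right: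
  assumes "bilinear_op f" "finite I"
  shows "f y (lin_comb I c x) = lin_comb I c (\<lambda>i. f y (x i))"
  using assms(2)
proof (induction I rule: finite_induct)
  case empty
  then show ?case using bilinear_op_zero_right[OF assms(1)] by simp
next
  case (insert i I)
  then show ?case using assms(1) unfolding bilinear_op_def by (simp add: lin_comb_insert)
qed

lemma bilinear_op_lin_comb:
  assumes "bilinear_op f" "finite I" "finite J"
  shows "f (lin_comb I c x) (lin_comb J d y) = lin_comb I c (\<lambda>i. lin_comb J d (\<lambda>j. f (x i) (y j)))"
  using assms by (simp add: bilinear_op_lin_comb_left bilinear_op_lin_comb_right)

lemma bilinear_op_bsq_op: "bilinear_op f \<Longrightarrow> bilinear_op (bsq_op f)"
  unfolding bilinear_op_def bsq_op_def
  by (simp add: vsub_def vadd_def vsmult_def fun_eq_iff algebra_simps)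

lemma bilinear_op_sq_op: "bilinear_op f \<Longrightarrow> bilinear_op (sq_op f)"
  unfolding bilinear_op_def sq_op_def
  by (simp add: vadd_def vsmult_def fun_eq_iff algebra_simps)

lemma dpair_sum_right: "dpair u (\<lambda>p. \<Sum>i\<in>I. f i p) = (\<Sum>i\<in>I. dpair u (f i))"
  by (simp add: dpair_def sum_distrib_left sum.swap[of _ UNIV])

lemma dpair_lin_comb: "dpair u (lin_comb I c x) = (\<Sum>i\<in>I. c i * dpair u (x i))"
  by (simp add: lin_comb_def dpair_sum_right) (simp add: dpair_def sum_distrib_left mult_ac)

lemma dpair_vadd_left: "dpair (vadd x y) z = dpair x z + dpair y z"
  by (simp add: dpair_def vadd_def distrib_right sum.distrib)

lemma dpair_vneg_left: "dpair (vneg x) y = - dpair x y"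
  by (simp add: dpair_def vneg_def sum_negf)

lemma dpair_basis_vec_left: "dpair (basis_vec p) x = x p"
proof -
  have "dpair (basis_vec p) x = (\<Sum>i\<in>UNIV. if i = p then x i else 0)"
    unfolding dpair_def basis_vec_def by (rule sum.cong) auto
  then show ?thesis by simp
qed

lemma dpair_dual_op:
  assumes "bilinear_op f"
  shows "dpair (dual_op f x v) y = - dpair v (f x y)"
proof -
  have "f x y = lin_comb UNIV y (\<lambda>j. f x (basis_vec j))"
    by (subst vec_eq_lin_comb_basis_vec[of y]) (simp add: bilinear_op_lin_comb_right[OF assms])
  then show ?thesis
    by (simp add: dpair_lin_comb dual_op_def) (simp add: dpair_def sum_negf mult_ac)
qed

lemma dpair_dual_op_lin_comb:
  assumes "bilinear_op f" "finite I"
  shows "dpair (dual_op f (lin_comb I c x) v) y = - (\<Sum>i\<in>I. c i * dpair v (f (x i) y))"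
  using assms by (simp add: dpair_dual_op bilinear_op_lin_comb_left dpair_lin_comb)

lemma dpair_bsq_op_swap: "dpair u (bsq_op f x y) = - dpair u (bsq_op f y x)"
  by (simp add: dpair_def bsq_op_def vsub_def sum_negf[symmetric] right_diff_distrib)

lemma dpair_add_right: "dpair u (\<lambda>p. x p + y p) = dpair u x + dpair u y"
  by (simp add: dpair_def distrib_left sum.distrib)

lemma dpair_diff_right: "dpair u (\<lambda>p. x p - y p) = dpair u x - dpair u y"
  by (simp add: dpair_def right_diff_distrib sum_subtractf)

lemma dpair_mult_const_right: "dpair u (\<lambda>p. x p * c) = dpair u x * c"
  by (simp add: dpair_def sum_distrib_right mult.assoc)

lemma dpair_const_mult_right: "dpair u (\<lambda>p. c * x p) = c * dpair u x"
  by (simp add: dpair_def sum_distrib_left mult.left_commute)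

definition contract2 ::
  "('k::field, 'n::finite) vec \<Rightarrow> ('k, 'n) vec \<Rightarrow> ('n \<Rightarrow> 'n \<Rightarrow> ('k, 'n) vec) \<Rightarrow> ('k, 'n) vec" where
  "contract2 u v T = (\<lambda>s. dpair u (\<lambda>p. dpair v (\<lambda>q. T p q s)))"

lemma contract2_basis_vec: "contract2 (basis_vec p) (basis_vec q) T = T p q"
  by (simp add: contract2_def dpair_basis_vec_left)

lemma tensor3_eq_zero_iff_contract2:
  "T = (\<lambda>p q s. 0) \<longleftrightarrow> (\<forall>u v. contract2 u v T = (\<lambda>_. 0))"
proof
  assume "T = (\<lambda>p q s. 0)"
  then show "\<forall>u v. contract2 u v T = (\<lambda>_. 0)" by (simp add: contract2_def dpair_def)
next
  assume H: "\<forall>u v. contract2 u v T = (\<lambda>_. 0)"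
  show "T = (\<lambda>p q s. 0)"
  proof (intro ext)
    fix p q s
    show "T p q s = 0"
      using H[rule_format, of "basis_vec p" "basis_vec q"] by (simp add: contract2_basis_vec)
  qed
qed

lemma contract2_P_of:
  "contract2 u v (P_of cc m a b) = (\<lambda>s. \<Sum>i<m. \<Sum>j<m.
      dpair u (a i) * dpair v (a j) * cc (b i) (b j) s
    - dpair u (a i) * dpair v (cc (b i) (a j)) * b j s
    + dpair u (bsq_op cc (a i) (a j)) * dpair v (b j) * b i s)"
  by (simp add: contract2_def P_of_def dpair_sum_right dpair_add_right dpair_diff_right
      dpair_mult_const_right dpair_const_mult_right)

lemma contract2_L_of:
  "contract2 u v (L_of br m a b) = (\<lambda>s. \<Sum>i<m. \<Sum>j<m.
      dpair u (a i) * dpair v (a j) * br (b i) (b j) s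
    + dpair u (a i) * dpair v (br (b i) (a j)) * b j s
    - dpair u (sq_op br (a i) (a j)) * dpair v (b i) * b j s)"
  by (simp add: contract2_def L_of_def dpair_sum_right dpair_add_right dpair_diff_right
      dpair_mult_const_right dpair_const_mult_right)

lemma r_tilde_tensor_of: "r_tilde (tensor_of m a b) u = lin_comb {..<m} (\<lambda>i. dpair u (a i)) b"
  by (simp add: r_tilde_def tensor_of_def lin_comb_def dpair_def sum_distrib_left sum_distrib_right
      sum.swap[of _ UNIV] mult_ac)

lemma tensor_of_swap: "tensor_sym (tensor_of m a b) \<Longrightarrow> tensor_of m a b = tensor_of m b a"
  by (simp add: tensor_sym_def tensor_of_def fun_eq_iff mult.commute)

lemma r_tilde_tensor_of_sym:
  assumes "tensor_sym (tensor_of m a b)"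
  shows "r_tilde (tensor_of m a b) u = lin_comb {..<m} (\<lambda>i. dpair u (b i)) a"
  unfolding tensor_of_swap[OF assms] by (rule r_tilde_tensor_of)

lemma r_tilde_tensor_of_apply: "r_tilde (tensor_of m a b) X s = (\<Sum>j<m. dpair X (a j) * b j s)"
  by (simp add: r_tilde_tensor_of lin_comb_def mult.commute)

lemma bilinear_op_r_tilde_tensor_of:
  assumes "bilinear_op f"
  shows "f (r_tilde (tensor_of m a b) u) (r_tilde (tensor_of m a b) v) s
    = (\<Sum>i<m. \<Sum>j<m. dpair u (a i) * dpair v (a j) * f (b i) (b j) s)"
  unfolding r_tilde_tensor_of bilinear_op_lin_comb[OF assms finite_lessThan finite_lessThan]
  by (simp add: lin_comb_def sum_distrib_left mult.assoc)

lemma cc_O_operator_defect: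
  assumes "bilinear_op cc" and "tensor_sym (tensor_of m a b)"
  defines "R \<equiv> r_tilde (tensor_of m a b)"
  shows "cc (R u) (R v) s - R (vadd (vneg (dual_op cc (R u) v)) (vneg (dual_op (bsq_op cc) (R v) u))) s
    = contract2 u v (P_of cc m a b) s"
proof -
  have R_u: "R u = lin_comb {..<m} (\<lambda>i. dpair u (a i)) b"
    unfolding R_def by (rule r_tilde_tensor_of)
  have R_v: "R v = lin_comb {..<m} (\<lambda>i. dpair v (b i)) a"
    unfolding R_def by (rule r_tilde_tensor_of_sym[OF assms(2)])
  have lhs: "cc (R u) (R v) s = (\<Sum>i<m. \<Sum>j<m. dpair u (a i) * dpair v (a j) * cc (b i) (b j) s)"
    unfolding R_def by (rule bilinear_op_r_tilde_tensor_of[OF assms(1)])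
  have "R (vadd (vneg (dual_op cc (R u) v)) (vneg (dual_op (bsq_op cc) (R v) u))) s
      = (\<Sum>j<m. (\<Sum>i<m. dpair u (a i) * dpair v (cc (b i) (a j))) * b j s)
      + (\<Sum>j<m. (\<Sum>i<m. dpair v (b i) * dpair u (bsq_op cc (a i) (a j))) * b j s)"
    unfolding R_u R_v unfolding R_def r_tilde_tensor_of_apply
    by (simp add: dpair_vadd_left dpair_vneg_left assms(1) bilinear_op_bsq_op dpair_dual_op_lin_comb
        distrib_right sum.distrib)
  also have "\<dots> = (\<Sum>i<m. \<Sum>j<m. dpair u (a i) * dpair v (cc (b i) (a j)) * b j s)
      - (\<Sum>i<m. \<Sum>j<m. dpair u (bsq_op cc (a i) (a j)) * dpair v (b j) * b i s)"
  proof -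
    have "(\<Sum>j<m. (\<Sum>i<m. dpair u (a i) * dpair v (cc (b i) (a j))) * b j s)
        = (\<Sum>i<m. \<Sum>j<m. dpair u (a i) * dpair v (cc (b i) (a j)) * b j s)"
      by (simp add: sum_distrib_right) (rule sum.swap)
    moreover have "(\<Sum>i<m. (\<Sum>j<m. dpair v (b j) * dpair u (bsq_op cc (a j) (a i))) * b i s)
        = - (\<Sum>i<m. \<Sum>j<m. dpair u (bsq_op cc (a i) (a j)) * dpair v (b j) * b i s)"
    proof -
      have "dpair v (b j) * dpair u (bsq_op cc (a j) (a i)) * b i s
          = - (dpair u (bsq_op cc (a i) (a j)) * dpair v (b j) * b i s)" for i j
        using dpair_bsq_op_swap[of u cc "a j" "a i"] by (simp add: mult_ac)
      then show ?thesis by (simp add: sum_distrib_right sum_negf)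
    qed
    ultimately show ?thesis by simp
  qed
  finally show ?thesis
    unfolding lhs contract2_P_of by (simp add: sum.distrib sum_subtractf)
qed

lemma br_O_operator_defect:
  assumes "bilinear_op br" and "tensor_sym (tensor_of m a b)"
  defines "R \<equiv> r_tilde (tensor_of m a b)"
  shows "br (R u) (R v) s - R (vadd (dual_op br (R u) v) (vneg (dual_op (sq_op br) (R v) u))) s
    = contract2 u v (L_of br m a b) s"
proof -
  have R_u: "R u = lin_comb {..<m} (\<lambda>i. dpair u (a i)) b"
    unfolding R_def by (rule r_tilde_tensor_of)
  have R_v: "R v = lin_comb {..<m} (\<lambda>i. dpair v (b i)) a"
    unfolding R_def by (rule r_tilde_tensor_of_sym[OF assms(2)])
  have lhs: "br (R u) (R v) s = (\<Sum>i<m. \<Sum>j<m. dpair u (a i) * dpair v (a j) * br (b i) (b j) s)"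
    unfolding R_def by (rule bilinear_op_r_tilde_tensor_of[OF assms(1)])
  have "R (vadd (dual_op br (R u) v) (vneg (dual_op (sq_op br) (R v) u))) s
      = (\<Sum>j<m. (\<Sum>i<m. dpair v (b i) * dpair u (sq_op br (a i) (a j))) * b j s)
      - (\<Sum>j<m. (\<Sum>i<m. dpair u (a i) * dpair v (br (b i) (a j))) * b j s)"
    unfolding R_u R_v unfolding R_def r_tilde_tensor_of_apply
    by (simp add: dpair_vadd_left dpair_vneg_left assms(1) bilinear_op_sq_op dpair_dual_op_lin_comb
        left_diff_distrib sum_subtractf)
  also have "\<dots> = (\<Sum>i<m. \<Sum>j<m. dpair v (b i) * dpair u (sq_op br (a i) (a j)) * b j s)
      - (\<Sum>i<m. \<Sum>j<m. dpair u (a i) * dpair v (br (b i) (a j)) * b j s)"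
  proof -
    have "(\<Sum>j<m. (\<Sum>i<m. dpair v (b i) * dpair u (sq_op br (a i) (a j))) * b j s)
        = (\<Sum>i<m. \<Sum>j<m. dpair v (b i) * dpair u (sq_op br (a i) (a j)) * b j s)"
      by (simp add: sum_distrib_right) (rule sum.swap)
    moreover have "(\<Sum>j<m. (\<Sum>i<m. dpair u (a i) * dpair v (br (b i) (a j))) * b j s)
        = (\<Sum>i<m. \<Sum>j<m. dpair u (a i) * dpair v (br (b i) (a j)) * b j s)"
      by (simp add: sum_distrib_right) (rule sum.swap)
    ultimately show ?thesis by simp
  qed
  finally show ?thesis
    unfolding lhs contract2_L_of by (simp add: sum.distrib sum_subtractf mult_ac)
qed

theorem proposition3p19:
  fixes cc br :: "('k::field_char_0, 'n::finite) vec \<Rightarrow> ('k, 'n) vec \<Rightarrow> ('k, 'n) vec"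
    and m :: nat and a b :: "nat \<Rightarrow> ('k, 'n) vec"
    and r :: "'n \<Rightarrow> 'n \<Rightarrow> 'k"
  assumes "dual_pre_poisson cc br"
    and "r = tensor_of m a b"
    and "tensor_sym r"
  shows "PLYBE_solution cc br m a b \<longleftrightarrow>
    (\<forall>u v.
       cc (r_tilde r u) (r_tilde r v)
         = r_tilde r (vadd (vneg (dual_op cc (r_tilde r u) v))
                          (vneg (dual_op (bsq_op cc) (r_tilde r v) u))) \<and>
       br (r_tilde r u) (r_tilde r v)
         = r_tilde r (vadd (dual_op br (r_tilde r u) v)
                          (vneg (dual_op (sq_op br) (r_tilde r v) u))))"
proof -
  have cc: "bilinear_op cc" and br: "bilinear_op br"
    using assms(1) by (simp_all add: dual_pre_poisson_def)
  have sym: "tensor_sym (tensor_of m a b)"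
    using assms(2,3) by simp
  have "P_of cc m a b = (\<lambda>p q s. 0) \<longleftrightarrow> (\<forall>u v.
      cc (r_tilde r u) (r_tilde r v)
        = r_tilde r (vadd (vneg (dual_op cc (r_tilde r u) v)) (vneg (dual_op (bsq_op cc) (r_tilde r v) u))))"
    unfolding tensor3_eq_zero_iff_contract2 assms(2)
    by (simp add: fun_eq_iff cc_O_operator_defect[OF cc sym, symmetric])
  moreover have "L_of br m a b = (\<lambda>p q s. 0) \<longleftrightarrow> (\<forall>u v.
      br (r_tilde r u) (r_tilde r v)
        = r_tilde r (vadd (dual_op br (r_tilde r u) v) (vneg (dual_op (sq_op br) (r_tilde r v) u))))"
    unfolding tensor3_eq_zero_iff_contract2 assms(2)
    by (simp add: fun_eq_iff br_O_operator_defect[OF br sym, symmetric])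
  ultimately show ?thesis
    unfolding PLYBE_solution_def by blast
qed

end
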